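(* Let $d$ be a positive even integer and $s$ a positive integer with $2s\leqslant d$. Then the union $\bigcup_{\varepsilon\in I^s}C_\varepsilon\subseteq\{0,1,*\}^d$ is a $(d-s)$-neighborly code, i.e. $\mathrm{dist}(u,v)\leqslant d-s$ for all $u,v$ in this union.
   Context: Strings over $\{0,1,*\}$ ($*$ is a "joker"); for $u,v\in\{0,1,*\}^n$, $\mathrm{dist}(u,v)$ is the number of positions $i$ with $u_i\neq v_i$ and $u_i,v_i\in\{0,1\}$. A set $A\subseteq\{0,1,*\}^n$ is a $k$-neighborly code if $\max_{u,v\in A}\mathrm{dist}(u,v)\leqslant k$. Concatenation identifies $(x,y)$ with the string $xy$. Let $I=\{0,1\}$, $|x|=\sum_i x_i$ for binary $x$. Let $*^0=\{*\}$, $*^1=I$, and for $\varepsilon\in I^s$, $*^\varepsilon=*^{\varepsilon_1}\times\cdots\times *^{\varepsilon_s}$. Let $\alpha=(0,\ldots,0)$, $\omega=(1,\ldots,1)\in I^s$. For $\varepsilon\in I^s\setminus\{\alpha,\omega\}$ let $i=t(\varepsilon)$ be the unique index with $\varepsilon_i\neq\varepsilon_{i+1}=\cdots=\varepsilon_s$, and $A_\varepsilon=\{\varepsilon_1\}\times\cdots\times\{\varepsilon_i\}\times I^{s-1-i}\subseteq I^{s-1}$. Define subsets of $I^{d-s}$: $X_0=\{x\colon |x|\leqslant \frac d2-s\}$; $X_k=\{x\colon |x|=\frac d2-s+k\}$ for $0<k<s$; $X_s=\{x\colon |x|\geqslant \frac d2\}$. For $\varepsilon\in I^s\setminus\{\alpha,\omega\}$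 set $B_\varepsilon=X_{|\varepsilon|}\cap(I^{d-2s+1}\times A_\varepsilon)$, where $I^{d-s}=I^{d-2s+1}\times I^{s-1}$; set $B_\alpha=X_0$, $B_\omega=X_s$. Finally $C_\varepsilon=B_\varepsilon\times *^\varepsilon\subseteq\{0,1,*\}^d$ for $\varepsilon\in I^s$. *)

theory Defs
  imports Main
begin

text \<open>Symbols of the alphabet {0,1,*}; Jk is the joker *.\<close>
datatype sym = S0 | S1 | Jk

definition dist :: "sym list \<Rightarrow> sym list \<Rightarrow> nat" where
  "dist u v = card {i. i < length u \<and> i < length v \<and> u!i \<noteq> v!i \<and> u!i \<noteq> Jk \<and> v!i \<noteq> Jk}"

definition neighborly :: "nat \<Rightarrow> sym list set \<Rightarrow> bool" where
  "neighborly k A \<longleftrightarrow> (\<forall>u\<in>A. \<forall>v\<in>A. dist u v \<le> k)"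

definition binstr :: "nat \<Rightarrow> nat list set" where
  "binstr n = {x. length x = n \<and> set x \<subseteq> {0,1}}"

definition wt :: "nat list \<Rightarrow> nat" where "wt x = sum_list x"

definition tosym :: "nat \<Rightarrow> sym" where "tosym b = (if b = 0 then S0 else S1)"

definition jok :: "nat list \<Rightarrow> sym list set" where
  "jok eps = listset (map (\<lambda>e. if e = 0 then {Jk} else {S0, S1}) eps)"

text \<open>t(eps) (1-indexed): the unique i with eps_i \<noteq> eps_(i+1) = ... = eps_s.\<close>
definition tpos :: "nat list \<Rightarrow> nat" where
  "tpos eps = (THE i. 1 \<le> i \<and> i < length eps \<and> eps!(i-1) \<noteq> eps!i \<and>
       (\<forall>j. i \<le> j \<and> j < length eps \<longrightarrow> eps!j = eps!(length eps - 1)))"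

definition Aset :: "nat list \<Rightarrow> nat list set" where
  "Aset eps = {a \<in> binstr (length eps - 1). \<forall>j < tpos eps. a!j = eps!j}"

definition Xset :: "nat \<Rightarrow> nat \<Rightarrow> nat \<Rightarrow> nat list set" where
  "Xset d s k =
    (if k = 0 then {x \<in> binstr (d - s). wt x \<le> d div 2 - s}
     else if k < s then {x \<in> binstr (d - s). wt x = d div 2 - s + k}
     else {x \<in> binstr (d - s). wt x \<ge> d div 2})"

text \<open>B_eps, with I^(d-s) = I^(d-2s+1) x I^(s-1).\<close>
definition Bset :: "nat \<Rightarrow> nat \<Rightarrow> nat list \<Rightarrow> nat list set" where
  "Bset d s eps =
    (if eps = replicate s 0 then Xset d s 0
     else if eps = replicate s 1 then Xset d s s
     else {x \<in> Xset d s (wt eps). drop (d - 2*s + 1) x \<in> Aset eps})"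

definition Cset :: "nat \<Rightarrow> nat \<Rightarrow> nat list \<Rightarrow> sym list set" where
  "Cset d s eps = {map tosym x @ w | x w. x \<in> Bset d s eps \<and> w \<in> jok eps}"

end

theory Submission
  imports Defs
begin

text \<open>
  Write \<open>u = x w \<in> C\<^sub>\<epsilon>\<close> and \<open>v = y w' \<in> C\<^sub>\<delta>\<close>. The joker parts can only disagree where
  \<open>\<epsilon>\<close> and \<open>\<delta>\<close> are both 1, and the binary parts agree wherever \<open>x\<close> and \<open>y\<close> are both 1,
  so \<open>dist(u, v) \<le> (d - s) - \<langle>x, y\<rangle> + \<langle>\<epsilon>, \<delta>\<rangle>\<close>. It therefore suffices that
  \<open>\<langle>\<epsilon>, \<delta>\<rangle> \<le> \<langle>x, y\<rangle>\<close>. Past position \<open>t(\<epsilon>)\<close> the word \<open>\<epsilon>\<close> is constant, and the factor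
  \<open>A\<^sub>\<epsilon>\<close> makes \<open>x\<close> copy the first \<open>t(\<epsilon>)\<close> letters of \<open>\<epsilon>\<close>; if \<open>t(\<epsilon>) \<le> t(\<delta>)\<close>, then \<open>y\<close>
  copies \<open>\<delta>\<close> on the same block. If the constant tail of \<open>\<epsilon>\<close> is 0, the block alone accounts for
  \<open>\<langle>\<epsilon>, \<delta>\<rangle>\<close>. If it is 1, the weight constraints of the sets \<open>X\<^sub>k\<close> force \<open>x\<close> and \<open>y\<close>
  to overlap outside the block in at least as many places as \<open>\<delta>\<close> has ones in the tail, by
  \<open>\<langle>x, y\<rangle> \<ge> |x| + |y| - n\<close>.
\<close>

definition dot :: "nat list \<Rightarrow> nat list \<Rightarrow> nat" where
  "dot x y = sum_list (map2 (*) x y)"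

lemma dot_Nil [simp]: "dot [] y = 0"
  by (simp add: dot_def)

lemma dot_Cons [simp]: "dot (a # x) (b # y) = a * b + dot x y"
  by (simp add: dot_def)

lemma dot_commute: "dot x y = dot y x"
  unfolding dot_def by (induction x y rule: list_induct2') auto

lemma dot_append: "length a = length c \<Longrightarrow> dot (a @ b) (c @ d) = dot a c + dot b d"
  by (simp add: dot_def)

lemma dot_replicate: "length y = n \<Longrightarrow> dot (replicate n c) y = c * wt y"
  unfolding wt_def by (induction y arbitrary: n) (auto simp: distrib_left)

lemma wt_append: "wt (x @ y) = wt x + wt y"
  by (simp add: wt_def)

lemma wt_replicate: "wt (replicate n a) = n * a"
  by (simp add: wt_def sum_list_replicate)

lemma wt_plus_wt_le_dot:
  "length x = length y \<Longrightarrow> set x \<subseteq> {0, 1} \<Longrightarrow> set y \<subseteq> {0, 1} \<Longrightarrow>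
   wt x + wt y \<le> dot x y + length x"
  unfolding wt_def dot_def by (induction x y rule: list_induct2) auto

definition mismatch :: "sym \<Rightarrow> sym \<Rightarrow> bool" where
  "mismatch a b \<longleftrightarrow> a \<noteq> b \<and> a \<noteq> Jk \<and> b \<noteq> Jk"

lemma dist_conv_filter: "dist u v = length (filter (case_prod mismatch) (zip u v))"
  unfolding dist_def length_filter_conv_card mismatch_def by (rule arg_cong[where f = card]) auto

lemma dist_Cons: "dist (a # u) (b # v) = (if mismatch a b then 1 else 0) + dist u v"
  by (simp add: dist_conv_filter)

lemma dist_append: "length a = length c \<Longrightarrow> dist (a @ b) (c @ d) = dist a c + dist b d"
  by (simp add: dist_conv_filter)

lemma dist_tosym_plus_dot_le:
  "length x = length y \<Longrightarrow> set x \<subseteq> {0, 1} \<Longrightarrow> set y \<subseteq> {0, 1} \<Longrightarrow>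
   dist (map tosym x) (map tosym y) + dot x y \<le> length x"
proof (induction x y rule: list_induct2)
  case Nil
  then show ?case by (simp add: dist_def)
next
  case (Cons a x b y)
  then show ?case by (auto simp: dist_Cons dot_def mismatch_def tosym_def)
qed

lemma dist_jok_le_dot:
  "length eps = length del \<Longrightarrow> w \<in> jok eps \<Longrightarrow> w' \<in> jok del \<Longrightarrow> dist w w' \<le> dot eps del"
proof (induction eps del arbitrary: w w' rule: list_induct2)
  case Nil
  then show ?case by (simp add: jok_def dist_def)
next
  case (Cons e eps f del)
  from Cons.prems obtain a v b v' where "w = a # v" "w' = b # v'" "v \<in> jok eps" "v' \<in> jok del"
    "a \<in> (if e = 0 then {Jk} else {S0, S1})" "b \<in> (if f = 0 then {Jk} else {S0, S1})"
    by (auto simp: jok_def set_Cons_def)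
  moreover have "(if mismatch a b then 1 else 0) \<le> e * f"
    using \<open>a \<in> _\<close> \<open>b \<in> _\<close> by (auto simp: mismatch_def split: if_splits)
  ultimately show ?case
    using Cons.IH by (simp add: dist_Cons add_mono)
qed

lemma tpos_spec:
  assumes "i < length eps" and "eps!i \<noteq> last eps"
  shows "tpos eps < length eps"
    and "drop (tpos eps) eps = replicate (length eps - tpos eps) (last eps)"
proof -
  define n where "n = length eps"
  have "eps \<noteq> []"
    using assms(1) by auto
  then have last: "eps!(n - 1) = last eps"
    by (simp add: n_def last_conv_nth)
  define Q where "Q i \<longleftrightarrow> (\<forall>j. i \<le> j \<and> j < n \<longrightarrow> eps!j = last eps)" for i
  define P where "P i \<longleftrightarrow> 1 \<le> i \<and> i < n \<and> eps!(i - 1) \<noteq> eps!i \<and> Q i" for i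
  define k where "k = Max {k. k < n \<and> eps!k \<noteq> last eps}"
  have "k \<in> {k. k < n \<and> eps!k \<noteq> last eps}"
    unfolding k_def by (rule Max_in) (use assms in \<open>auto simp: n_def\<close>)
  then have k: "k < n" "eps!k \<noteq> last eps"
    by simp_all
  have k_max: "j \<le> k" if "j < n" "eps!j \<noteq> last eps" for j
    using that by (auto simp: k_def)
  have "Suc k < n"
    using k last by (metis Suc_lessI diff_Suc_1)
  then have P_Suc_k: "P (Suc k)"
    using k k_max by (fastforce simp: P_def Q_def)
  have "i = Suc k" if "P i" for i
  proof (cases i "Suc k" rule: linorder_cases)
    case less
    then show ?thesis using that k by (auto simp: P_def Q_def)
  next
    case equal
    then show ?thesis .
  next
    case greater
    moreover have "Q (Suc k)" "i < n"
      using P_Suc_k that by (simp_all add: P_def)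
    moreover have "Suc k \<le> i - 1" "i - 1 < n"
      using greater \<open>i < n\<close> by linarith+
    ultimately have "eps!(i - 1) = last eps" "eps!i = last eps"
      unfolding Q_def by (blast, simp)
    then show ?thesis using that by (simp add: P_def)
  qed
  with P_Suc_k have "tpos eps = Suc k"
    unfolding tpos_def P_def Q_def n_def[symmetric] last by (rule the_equality)
  with P_Suc_k have t: "tpos eps < n" "Q (tpos eps)"
    by (simp_all add: P_def)
  then show "tpos eps < length eps" by (simp add: n_def)
  show "drop (tpos eps) eps = replicate (length eps - tpos eps) (last eps)"
    using t by (intro replicate_eqI) (auto simp: Q_def n_def in_set_conv_nth)
qed

lemma wt_pos_if_ne_replicate_0: "x \<in> binstr n \<Longrightarrow> x \<noteq> replicate n 0 \<Longrightarrow> 0 < wt x"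
  by (induction x arbitrary: n) (auto simp: wt_def binstr_def)

lemma wt_le_length: "set x \<subseteq> {0, 1} \<Longrightarrow> wt x \<le> length x"
  by (induction x) (auto simp: wt_def)

lemma wt_less_if_ne_replicate_1: "x \<in> binstr n \<Longrightarrow> x \<noteq> replicate n 1 \<Longrightarrow> wt x < n"
proof (induction x arbitrary: n)
  case (Cons a x)
  then show ?case
    using wt_le_length[of x] by (cases n) (auto simp: wt_def binstr_def)
qed (simp add: binstr_def)

lemma Aset_take_tpos:
  assumes "tpos eps < length eps" and "a \<in> Aset eps"
  shows "take (tpos eps) a = take (tpos eps) eps"
  using assms by (intro nth_equalityI) (auto simp: Aset_def binstr_def)

lemma Bset_subset_binstr: "Bset d s eps \<subseteq> binstr (d - s)"
  by (auto simp: Bset_def Xset_def)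

lemma Bset_wt_ge:
  assumes "eps \<in> binstr s" and "eps \<noteq> replicate s 0" and "x \<in> Bset d s eps"
  shows "d div 2 + wt eps \<le> wt x + s"
proof (cases "eps = replicate s 1")
  case True
  with assms have "s \<noteq> 0" by auto
  with True assms show ?thesis by (auto simp: Bset_def Xset_def wt_replicate)
next
  case False
  with assms have "0 < wt eps" "wt eps < s"
    using wt_pos_if_ne_replicate_0 wt_less_if_ne_replicate_1 by auto
  with False assms show ?thesis by (auto simp: Bset_def Xset_def)
qed

lemma Bset_prefix_agreement:
  assumes "eps \<in> binstr s" and "eps \<noteq> replicate s 0"
  obtains t c where "t < s" and "c \<le> 1" and "drop t eps = replicate (s - t) c"
    and "\<And>x. x \<in> Bset d s eps \<Longrightarrow> take t (drop (d - 2 * s + 1) x) = take t eps"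
proof (cases "eps = replicate s 1")
  case True
  \<comment> \<open>\<open>t(\<omega>)\<close> is undefined; the empty block \<open>t = 0\<close> serves instead\<close>
  with assms have "s \<noteq> 0" by auto
  with True show ?thesis by (intro that[of 0 1]) auto
next
  case False
  have len: "length eps = s" and "s \<noteq> 0"
    using assms by (auto simp: binstr_def)
  then have "last eps \<in> set eps"
    by auto
  then have last: "last eps \<in> {0, 1}"
    using assms(1) unfolding binstr_def by blast
  have "\<exists>i<s. eps!i \<noteq> last eps"
  proof (rule ccontr)
    assume "\<not> (\<exists>i<s. eps!i \<noteq> last eps)"
    then have "eps = replicate s (last eps)"
      by (intro replicate_eqI) (auto simp: len in_set_conv_nth)
    with last False assms(2) show False by auto
  qed
  then have "tpos eps < s" "drop (tpos eps) eps = replicate (s - tpos eps) (last eps)"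
    using tpos_spec len by auto
  moreover have "take (tpos eps) (drop (d - 2 * s + 1) x) = take (tpos eps) eps"
    if "x \<in> Bset d s eps" for x
    using that False assms(2) Aset_take_tpos \<open>tpos eps < s\<close> len by (auto simp: Bset_def)
  moreover have "last eps \<le> 1"
    using last by auto
  ultimately show ?thesis by (intro that)
qed

lemma dot_le_dot_of_common_block:
  assumes x: "x \<in> binstr m" and y: "y \<in> binstr m"
    and eps: "eps \<in> binstr s" and del: "del \<in> binstr s"
    and "t \<le> s" and "c \<le> 1" and eps_tail: "drop t eps = replicate (s - t) c"
    and x_block: "take t (drop n x) = take t eps" and y_block: "take t (drop n y) = take t del"
    and m_h: "m + s = 2 * h" and wt_x: "h + wt eps \<le> wt x + s" and wt_y: "h + wt del \<le> wt y + s"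
  shows "dot eps del \<le> dot x y"
proof -
  define a b where "a = take t eps" and "b = take t del"
  define xp xq yp yq
    where "xp = take n x" and "xq = drop t (drop n x)" and "yp = take n y" and "yq = drop t (drop n y)"
  have x_split: "x = xp @ a @ xq"
    using x_block unfolding a_def xp_def xq_def by (metis append_take_drop_id)
  have y_split: "y = yp @ b @ yq"
    using y_block unfolding b_def yp_def yq_def by (metis append_take_drop_id)
  have eps_split: "eps = a @ replicate (s - t) c"
    using eps_tail unfolding a_def by (metis append_take_drop_id)
  have del_split: "del = b @ drop t del"
    unfolding b_def by simp
  have len: "length a = t" "length b = t" "length (drop t del) = s - t" "length xp = length yp"
    "length xq = length yq" "length x = m"
    using x y eps del \<open>t \<le> s\<close> by (auto simp: a_def b_def xp_def yp_def xq_def yq_def binstr_def)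
  have dot_xy: "dot x y = dot xp yp + dot a b + dot xq yq"
    by (subst x_split, subst y_split) (simp add: dot_append len)
  have dot_eps_del: "dot eps del = dot a b + dot (replicate (s - t) c) (drop t del)"
    by (subst eps_split, subst del_split) (simp add: dot_append len)
  show ?thesis
  proof (cases "c = 0")
    case True
    then show ?thesis using dot_xy dot_eps_del by (simp add: dot_replicate[OF len(3)])
  next
    case False
    with \<open>c \<le> 1\<close> have "c = 1"
      by simp
    then have "dot eps del = dot a b + wt (drop t del)"
      using dot_eps_del by (simp add: dot_replicate[OF len(3)])
    moreover have "set xp \<subseteq> {0, 1}" "set xq \<subseteq> {0, 1}" "set yp \<subseteq> {0, 1}" "set yq \<subseteq> {0, 1}"
      using x y x_split y_split by (auto simp: binstr_def)
    then have "wt xp + wt yp \<le> dot xp yp + length xp" "wt xq + wt yq \<le> dot xq yq + length xq"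
      using wt_plus_wt_le_dot len by auto
    moreover have "wt x = wt xp + wt a + wt xq" "wt y = wt yp + wt b + wt yq"
      by (subst x_split y_split, simp add: wt_append)+
    moreover have "wt eps = wt a + (s - t)"
      by (subst eps_split) (simp add: wt_append wt_replicate \<open>c = 1\<close>)
    moreover have "wt del = wt b + wt (drop t del)"
      by (subst del_split) (simp add: wt_append)
    moreover have "m = length xp + t + length xq"
      by (subst len(6)[symmetric], subst x_split) (simp add: len)
    ultimately show ?thesis
      using dot_xy m_h wt_x wt_y \<open>t \<le> s\<close> by linarith
  qed
qed

lemma dot_le_dot_Bset:
  assumes "even d" and "2 * s \<le> d"
    and eps: "eps \<in> binstr s" and del: "del \<in> binstr s"
    and x: "x \<in> Bset d s eps" and y: "y \<in> Bset d s del"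
  shows "dot eps del \<le> dot x y"
proof (cases "eps = replicate s 0 \<or> del = replicate s 0")
  case True
  moreover have "length eps = s" "length del = s"
    using eps del by (simp_all add: binstr_def)
  ultimately have "dot eps del = 0"
    using dot_replicate dot_commute by (metis mult_0)
  then show ?thesis by simp
next
  case False
  define n where "n = d - 2 * s + 1"
  obtain t c where t: "t < s" "c \<le> 1" "drop t eps = replicate (s - t) c"
    and x_block: "take t (drop n x) = take t eps"
    using Bset_prefix_agreement[OF eps] False x unfolding n_def by metis
  obtain t' c' where t': "t' < s" "c' \<le> 1" "drop t' del = replicate (s - t') c'"
    and y_block: "take t' (drop n y) = take t' del"
    using Bset_prefix_agreement[OF del] False y unfolding n_def by metis
  have xy: "x \<in> binstr (d - s)" "y \<in> binstr (d - s)"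
    using x y Bset_subset_binstr by blast+
  have h: "d - s + s = 2 * (d div 2)"
    using assms(1,2) by auto
  have wt_x: "d div 2 + wt eps \<le> wt x + s" and wt_y: "d div 2 + wt del \<le> wt y + s"
    using Bset_wt_ge eps del x y False by auto
  show ?thesis
  proof (cases "t \<le> t'")
    case True
    then have "take t (drop n y) = take t del"
      using y_block by (metis min.absorb1 take_take)
    then show ?thesis
      using dot_le_dot_of_common_block[OF xy eps del _ t(2,3) x_block _ h wt_x wt_y] t(1) by simp
  next
    case False
    then have "take t' (drop n x) = take t' eps"
      using x_block by (metis min.absorb1 take_take nat_le_linear)
    then have "dot del eps \<le> dot y x"
      using dot_le_dot_of_common_block[OF xy(2,1) del eps _ t'(2,3) y_block _ h wt_y wt_x] t'(1)
      by simp
    then show ?thesis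
      by (simp add: dot_commute)
  qed
qed

theorem lemma5:
  fixes d s :: nat
  assumes "d > 0" and "even d" and "s > 0" and "2 * s \<le> d"
  shows "neighborly (d - s) (\<Union>eps \<in> binstr s. Cset d s eps)"
  unfolding neighborly_def
proof (intro ballI)
  fix u v
  assume "u \<in> (\<Union>eps \<in> binstr s. Cset d s eps)" and "v \<in> (\<Union>eps \<in> binstr s. Cset d s eps)"
  then obtain eps x w del y w' where eps: "eps \<in> binstr s" and del: "del \<in> binstr s"
    and x: "x \<in> Bset d s eps" and y: "y \<in> Bset d s del"
    and w: "w \<in> jok eps" and w': "w' \<in> jok del"
    and u: "u = map tosym x @ w" and v: "v = map tosym y @ w'"
    unfolding Cset_def by blast
  have xy: "x \<in> binstr (d - s)" "y \<in> binstr (d - s)"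
    using x y Bset_subset_binstr by blast+
  have "dist u v = dist (map tosym x) (map tosym y) + dist w w'"
    using xy by (simp add: u v dist_append binstr_def)
  also have "\<dots> \<le> dist (map tosym x) (map tosym y) + dot x y"
    using dist_jok_le_dot[OF _ w w'] dot_le_dot_Bset[OF assms(2,4) eps del x y] eps del
    by (simp add: binstr_def)
  also have "\<dots> \<le> d - s"
    using dist_tosym_plus_dot_le[of x y] xy by (simp add: binstr_def)
  finally show "dist u v \<le> d - s" .
qed

end
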